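(* Let $\Upsilon_{0:k}$ be the Choi operator of a valid $k$-slot process tensor on $n$ qubits, and suppose it admits a matrix product operator (MPO) representation \[ \Upsilon_{0:k}=\sum_{\mu_1=1}^{D'_1}\cdots\sum_{\mu_k=1}^{D'_k}M^{(0)}_{\mu_1}\otimes M^{(1)}_{\mu_1\mu_2}\otimes\cdots\otimes M^{(k-1)}_{\mu_{k-1}\mu_k}\otimes M^{(k)}_{\mu_k}, \] where each $M^{(j)}_{\cdots}$ is an operator on $\mathcal{H}_{\mathfrak{i}_j}\otimes\mathcal{H}_{\mathfrak{o}_j}$, so that the inner (virtual) bond dimensions are $D'_j$. Then the joint probability distribution over Pauli trajectories \[ \Pr(x_0,\dots,x_k)=\frac{1}{\mathcal{N}}\mathrm{Tr}\Big[\Big(\bigotimes_{j=0}^k\Pi_{x_j}\Big)\Upsilon_{0:k}\Big],\qquad \mathcal{N}=\sum_{x_0,\dots,x_k\in\mathbb{P}^{(n)}}\mathrm{Tr}\Big[\Big(\bigotimes_{j=0}^k\Pi_{x_j}\Big)\Upsilon_{0:k}\Big], \] admits a matrix product state (MPS) representation \[ \Pr(x_0,\dots,x_k)=\sum_{\mu_1=1}^{D_1}\cdots\sum_{\mu_k=1}^{D_k}A^{(0)}_{x_0\mu_1}A^{(1)}_{\mu_1x_1\mu_2}\cdots A^{(k)}_{\mu_kx_k} \] with inner bond dimensions satisfying $D_j\le D'_j$ for all $j$.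
   Context: $\mathbb{P}^{(n)}=\{I,X,Y,Z\}^{\otimes n}$ is the set of $n$-qubit Pauli operators; for $x\in\mathbb{P}^{(n)}$, $\Pi_x=|x\rangle\!\rangle\langle\!\langle x|$ with $|x\rangle\!\rangle=(\mathbb{I}\otimes x)\sum_i|i\rangle|i\rangle$, acting on $\mathcal{H}_{\mathfrak{i}_j}\otimes\mathcal{H}_{\mathfrak{o}_j}$ at time step $j$. A $k$-slot process tensor has Choi operator $\Upsilon_{0:k}$ on $\bigotimes_{j=0}^k(\mathcal{H}_{\mathfrak{i}_j}\otimes\mathcal{H}_{\mathfrak{o}_j})$ (each factor $n$ qubits); it is valid iff $\Upsilon_{0:k}\ge0$ and there are operators $\Upsilon_{0:j}$ on the first $j+1$ slots ($\Upsilon_{0:k}$ the given one) with $\mathrm{Tr}_{\mathfrak{o}_j}[\Upsilon_{0:j}]=\Upsilon_{0:j-1}\otimes\mathbb{I}_{\mathfrak{i}_j}$ for $j\ge1$ and $\mathrm{Tr}_{\mathfrak{o}_0}[\Upsilon_{0:0}]=\mathbb{I}_{\mathfrak{i}_0}$. The distribution $\Pr$ is the spatiotemporal Pauli process obtained from $\Upsilon_{0:k}$ by the multi-time Pauli twirl. The $A^{(j)}$ are real/complex arrays indexed as shown. *)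

theory Defs
  imports Complex_Main
begin

datatype pauli = PI | PX | PY | PZ

definition pauli1 :: "pauli \<Rightarrow> nat \<Rightarrow> nat \<Rightarrow> complex" where
  "pauli1 p a b = (case p of
      PI \<Rightarrow> (if a = b then 1 else 0)
    | PX \<Rightarrow> (if a \<noteq> b then 1 else 0)
    | PY \<Rightarrow> (if a = b then 0 else if a = 0 then - \<i> else \<i>)
    | PZ \<Rightarrow> (if a = b then (if a = 0 then 1 else -1) else 0))"

definition pauli_strings :: "nat \<Rightarrow> (nat \<Rightarrow> pauli) set" where
  "pauli_strings n = {x. \<forall>q\<ge>n. x q = PI}"

text \<open>Matrix entries (computational basis indices a b < 2^n) of the tensor product Pauli;
  qubit q corresponds to bit q of the index.\<close>
definition pauli_op :: "nat \<Rightarrow> (nat \<Rightarrow> pauli) \<Rightarrow> nat \<Rightarrow> nat \<Rightarrow> complex" where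
  "pauli_op n x a b = (\<Prod>q<n. pauli1 (x q) (a div 2 ^ q mod 2) (b div 2 ^ q mod 2))"

text \<open>A basis index of one time step H_i (x) H_o is a pair (a, b): a indexes the
  input space, b the output space. The Choi vector |x>> = (I (x) x) sum_i |i>|i>
  has component x_{b a} at (a, b); Pi_x = |x>><<x|.\<close>
type_synonym slot_idx = "nat \<times> nat"
type_synonym multi_idx = "nat \<Rightarrow> nat \<times> nat"
type_synonym mop = "multi_idx \<Rightarrow> multi_idx \<Rightarrow> complex"

definition choi_vec :: "nat \<Rightarrow> (nat \<Rightarrow> pauli) \<Rightarrow> slot_idx \<Rightarrow> complex" where
  "choi_vec n x ab = pauli_op n x (snd ab) (fst ab)"

definition choi_proj :: "nat \<Rightarrow> (nat \<Rightarrow> pauli) \<Rightarrow> slot_idx \<Rightarrow> slot_idx \<Rightarrow> complex" where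
  "choi_proj n x u v = choi_vec n x u * cnj (choi_vec n x v)"

definition idx :: "nat \<Rightarrow> nat \<Rightarrow> multi_idx set" where
  "idx n m = {f. (\<forall>j<m. fst (f j) < 2 ^ n \<and> snd (f j) < 2 ^ n) \<and> (\<forall>j\<ge>m. f j = (0, 0))}"

definition psd :: "nat \<Rightarrow> nat \<Rightarrow> mop \<Rightarrow> bool" where
  "psd n m U \<longleftrightarrow>
     (\<forall>f\<in>idx n m. \<forall>g\<in>idx n m. U g f = cnj (U f g)) \<and>
     (\<forall>v :: multi_idx \<Rightarrow> complex.
        let q = (\<Sum>f\<in>idx n m. \<Sum>g\<in>idx n m. cnj (v f) * U f g * v g)
        in Im q = 0 \<and> Re q \<ge> 0)"

text \<open>Valid k-slot process tensor (operator on steps 0..k): positive, and there is a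
  hierarchy W 0, ..., W k = U (W j on steps 0..j) with
  Tr_{o_j} W j = W (j-1) (x) I_{i_j} for j >= 1 and Tr_{o_0} W 0 = I_{i_0}.\<close>
definition valid_process_tensor :: "nat \<Rightarrow> nat \<Rightarrow> mop \<Rightarrow> bool" where
  "valid_process_tensor n k U \<longleftrightarrow>
     psd n (Suc k) U \<and>
     (\<exists>W :: nat \<Rightarrow> mop. W k = U \<and>
        (\<forall>j\<le>k. \<forall>f\<in>idx n j. \<forall>g\<in>idx n j. \<forall>a<2 ^ n. \<forall>a'<2 ^ n.
           (\<Sum>b<2 ^ n. W j (f(j := (a, b))) (g(j := (a', b))))
             = (if j = 0 then 1 else W (j - 1) f g) * (if a = a' then 1 else 0)))"

definition trajs :: "nat \<Rightarrow> nat \<Rightarrow> (nat \<Rightarrow> nat \<Rightarrow> pauli) set" where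
  "trajs n k = {x. (\<forall>j\<le>k. x j \<in> pauli_strings n) \<and> (\<forall>j>k. x j = (\<lambda>_. PI))}"

definition tr_proj :: "nat \<Rightarrow> nat \<Rightarrow> (nat \<Rightarrow> nat \<Rightarrow> pauli) \<Rightarrow> mop \<Rightarrow> complex" where
  "tr_proj n k x U =
     (\<Sum>f\<in>idx n (Suc k). \<Sum>g\<in>idx n (Suc k).
        (\<Prod>j\<le>k. choi_proj n (x j) (f j) (g j)) * U g f)"

definition pauli_process :: "nat \<Rightarrow> nat \<Rightarrow> mop \<Rightarrow> (nat \<Rightarrow> nat \<Rightarrow> pauli) \<Rightarrow> complex" where
  "pauli_process n k U x = tr_proj n k x U / (\<Sum>y\<in>trajs n k. tr_proj n k y U)"

text \<open>Virtual bond index assignments mu_1..mu_k with mu_j < D j (0-based);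
  mu_0 = mu_{k+1} = 0 are the trivial boundary bonds.\<close>
definition bonds :: "(nat \<Rightarrow> nat) \<Rightarrow> nat \<Rightarrow> (nat \<Rightarrow> nat) set" where
  "bonds D k = {\<mu>. \<mu> 0 = 0 \<and> (\<forall>j\<in>{1..k}. \<mu> j < D j) \<and> (\<forall>j>k. \<mu> j = 0)}"

definition is_mpo :: "nat \<Rightarrow> nat \<Rightarrow> (nat \<Rightarrow> nat) \<Rightarrow>
     (nat \<Rightarrow> nat \<Rightarrow> nat \<Rightarrow> slot_idx \<Rightarrow> slot_idx \<Rightarrow> complex) \<Rightarrow> mop \<Rightarrow> bool" where
  "is_mpo n k D' M U \<longleftrightarrow>
     (\<forall>f\<in>idx n (Suc k). \<forall>g\<in>idx n (Suc k).
        U f g = (\<Sum>\<mu>\<in>bonds D' k. \<Prod>j\<le>k. M j (\<mu> j) (\<mu> (Suc j)) (f j) (g j)))"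

end

theory Submission
  imports Defs
begin

text \<open>The projector \<open>\<Pi>\<^sub>x\<^sub>0 \<otimes> \<dots> \<otimes> \<Pi>\<^sub>x\<^sub>k\<close> is a product over time steps, so tracing it
  against an MPO contracts every MPO tensor separately: \<open>A j l x r = Tr[\<Pi>\<^sub>x M j l r]\<close> is an MPS
  with the same bonds as the MPO, and the normalisation \<open>1 / \<N>\<close> is absorbed into \<open>A 0\<close>.\<close>

definition slot_indices :: "nat \<Rightarrow> slot_idx set" where
  "slot_indices n = {..<2 ^ n} \<times> {..<2 ^ n}"

definition slot_proj_trace :: "nat \<Rightarrow> (nat \<Rightarrow> pauli) \<Rightarrow> (slot_idx \<Rightarrow> slot_idx \<Rightarrow> complex) \<Rightarrow> complex"
  where "slot_proj_trace n x T = (\<Sum>a\<in>slot_indices n. \<Sum>b\<in>slot_indices n. choi_proj n x a b * T b a)"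

lemma idx_0: "idx n 0 = {\<lambda>_. (0, 0)}"
  unfolding idx_def by auto

lemma idx_Suc: "idx n (Suc m) = (\<lambda>(f, a). f(m := a)) ` (idx n m \<times> slot_indices n)"
proof
  show "idx n (Suc m) \<subseteq> (\<lambda>(f, a). f(m := a)) ` (idx n m \<times> slot_indices n)"
  proof
    fix f assume f: "f \<in> idx n (Suc m)"
    have "f m \<in> slot_indices n"
      using f unfolding idx_def slot_indices_def by (cases "f m") auto
    moreover have "f(m := (0, 0)) \<in> idx n m"
      using f unfolding idx_def by (auto simp: Suc_le_eq)
    moreover have "f = (\<lambda>(g, a). g(m := a)) (f(m := (0, 0)), f m)"
      by simp
    ultimately show "f \<in> (\<lambda>(f, a). f(m := a)) ` (idx n m \<times> slot_indices n)"
      by blast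
  qed
  show "(\<lambda>(f, a). f(m := a)) ` (idx n m \<times> slot_indices n) \<subseteq> idx n (Suc m)"
    unfolding idx_def slot_indices_def by (auto simp: less_Suc_eq)
qed

lemma inj_on_idx_Suc: "inj_on (\<lambda>(f, a). f(m := a)) (idx n m \<times> slot_indices n)"
proof (rule inj_onI, clarify)
  fix f a g b
  assume f: "f \<in> idx n m" and g: "g \<in> idx n m" and eq: "f(m := a) = g(m := b)"
  have "f m = g m"
    using f g unfolding idx_def by simp
  then have "f = g"
    using eq by (metis fun_upd_triv fun_upd_upd)
  moreover have "a = b"
    using fun_cong[OF eq, of m] by simp
  ultimately show "f = g \<and> a = b" ..
qed

lemma sum_idx_prod:
  fixes h :: "nat \<Rightarrow> slot_idx \<Rightarrow> 'a::comm_semiring_1"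
  shows "(\<Sum>f\<in>idx n m. \<Prod>j<m. h j (f j)) = (\<Prod>j<m. \<Sum>a\<in>slot_indices n. h j a)"
proof (induction m)
  case 0
  show ?case by (simp add: idx_0)
next
  case (Suc m)
  have "(\<Sum>f\<in>idx n (Suc m). \<Prod>j<Suc m. h j (f j))
      = (\<Sum>(f, a)\<in>idx n m \<times> slot_indices n. \<Prod>j<Suc m. h j ((f(m := a)) j))"
    by (subst idx_Suc, subst sum.reindex[OF inj_on_idx_Suc]) (simp only: comp_def case_prod_unfold)
  also have "\<dots> = (\<Sum>(f, a)\<in>idx n m \<times> slot_indices n. (\<Prod>j<m. h j (f j)) * h m a)"
    by (intro sum.cong refl) (auto intro!: prod.cong)
  also have "\<dots> = (\<Sum>f\<in>idx n m. \<Prod>j<m. h j (f j)) * (\<Sum>a\<in>slot_indices n. h m a)"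
    by (simp add: sum.cartesian_product[symmetric] sum_product)
  finally show ?case
    using Suc.IH by simp
qed

lemma sum_idx_idx_prod:
  fixes F :: "nat \<Rightarrow> slot_idx \<Rightarrow> slot_idx \<Rightarrow> 'a::comm_semiring_1"
  shows "(\<Sum>f\<in>idx n m. \<Sum>g\<in>idx n m. \<Prod>j<m. F j (f j) (g j))
     = (\<Prod>j<m. \<Sum>a\<in>slot_indices n. \<Sum>b\<in>slot_indices n. F j a b)"
proof -
  have "(\<Sum>f\<in>idx n m. \<Sum>g\<in>idx n m. \<Prod>j<m. F j (f j) (g j))
      = (\<Sum>f\<in>idx n m. \<Prod>j<m. \<Sum>b\<in>slot_indices n. F j (f j) b)"
    by (intro sum.cong refl sum_idx_prod)
  also have "\<dots> = (\<Prod>j<m. \<Sum>a\<in>slot_indices n. \<Sum>b\<in>slot_indices n. F j a b)"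
    by (rule sum_idx_prod)
  finally show ?thesis .
qed

lemma tr_proj_mpo:
  assumes "is_mpo n k D' M U"
  shows "tr_proj n k x U
    = (\<Sum>\<mu>\<in>bonds D' k. \<Prod>j\<le>k. slot_proj_trace n (x j) (M j (\<mu> j) (\<mu> (Suc j))))"
proof -
  have "tr_proj n k x U = (\<Sum>f\<in>idx n (Suc k). \<Sum>g\<in>idx n (Suc k). \<Sum>\<mu>\<in>bonds D' k.
      \<Prod>j<Suc k. choi_proj n (x j) (f j) (g j) * M j (\<mu> j) (\<mu> (Suc j)) (g j) (f j))"
    using assms unfolding tr_proj_def is_mpo_def
    by (intro sum.cong refl) (simp add: sum_distrib_left prod.distrib lessThan_Suc_atMost)
  also have "\<dots> = (\<Sum>\<mu>\<in>bonds D' k. \<Sum>f\<in>idx n (Suc k). \<Sum>g\<in>idx n (Suc k).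
      \<Prod>j<Suc k. choi_proj n (x j) (f j) (g j) * M j (\<mu> j) (\<mu> (Suc j)) (g j) (f j))"
    by (subst sum.swap, subst (2) sum.swap) (rule refl)
  also have "\<dots> = (\<Sum>\<mu>\<in>bonds D' k. \<Prod>j\<le>k. slot_proj_trace n (x j) (M j (\<mu> j) (\<mu> (Suc j))))"
    unfolding slot_proj_trace_def lessThan_Suc_atMost[symmetric]
    by (intro sum.cong refl sum_idx_idx_prod)
  finally show ?thesis .
qed

lemma prod_atMost_scale_first:
  fixes c :: "'a::comm_monoid_mult" and k :: nat
  shows "(\<Prod>j\<le>k. (if j = 0 then c else 1) * B j) = c * (\<Prod>j\<le>k. B j)"
  by (induction k) (simp_all add: atMost_Suc ac_simps)

theorem lemma1:
  fixes n k :: nat and U :: mop and D' :: "nat \<Rightarrow> nat"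
    and M :: "nat \<Rightarrow> nat \<Rightarrow> nat \<Rightarrow> slot_idx \<Rightarrow> slot_idx \<Rightarrow> complex"
  assumes "valid_process_tensor n k U"
    and "is_mpo n k D' M U"
  shows "\<exists>(D :: nat \<Rightarrow> nat) (A :: nat \<Rightarrow> nat \<Rightarrow> (nat \<Rightarrow> pauli) \<Rightarrow> nat \<Rightarrow> complex).
           (\<forall>j\<in>{1..k}. D j \<le> D' j) \<and>
           (\<forall>x\<in>trajs n k. pauli_process n k U x =
              (\<Sum>\<mu>\<in>bonds D k. \<Prod>j\<le>k. A j (\<mu> j) (x j) (\<mu> (Suc j))))"
proof -
  define N where "N = (\<Sum>y\<in>trajs n k. tr_proj n k y U)"
  define A where "A j l x r = (if j = 0 then 1 / N else 1) * slot_proj_trace n x (M j l r)"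
    for j l x r
  have "pauli_process n k U x = (\<Sum>\<mu>\<in>bonds D' k. \<Prod>j\<le>k. A j (\<mu> j) (x j) (\<mu> (Suc j)))" for x
  proof -
    have "pauli_process n k U x = 1 / N * tr_proj n k x U"
      unfolding pauli_process_def N_def by simp
    also have "\<dots> = (\<Sum>\<mu>\<in>bonds D' k. \<Prod>j\<le>k. A j (\<mu> j) (x j) (\<mu> (Suc j)))"
      unfolding tr_proj_mpo[OF assms(2)] sum_distrib_left A_def prod_atMost_scale_first ..
    finally show ?thesis .
  qed
  then show ?thesis
    by blast
qed

end
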